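(* For $n\geq5$, \[\frac{\lceil (n-1)/2\rceil - \lfloor (n-1)/2\rfloor}{\lceil (n-1)/2\rceil} + \frac{\lfloor (n+1)/2\rfloor}{\lceil (n+1)/2\rceil}\leq \frac{\ell_{n}(n)}{\ell_{n-1}(n)}\leq \frac{n+1}{n}.\]
   Context: For $0\leq i\leq 2n$, $\ell_i(n)$ denotes the number of vectors in $\{0,1,2\}^n$ whose coordinates sum to $i$. *)

theory Defs
  imports Complex_Main "HOL-Library.FuncSet"
begin

definition ell :: "nat \<Rightarrow> nat \<Rightarrow> nat" where
  "ell i n = card {v \<in> {0..<n} \<rightarrow>\<^sub>E {0::nat, 1, 2}. (\<Sum>j<n. v j) = i}"

end

theory Submission
  imports Defs
begin

text \<open>
  The number of vectors in \<open>{0,1,2}\<^sup>n\<close> with coordinate sum \<open>i\<close> is the coefficient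
  \<open>c(n,i)\<close> of \<open>x\<^sup>i\<close> in \<open>(1 + x + x\<^sup>2)\<^sup>n\<close>. Besides the Pascal-type recurrence in \<open>n\<close>,
  these coefficients satisfy a three-term recurrence in \<open>i\<close>, obtained by comparing coefficients
  in \<open>(1 + x + x\<^sup>2) P' = n (1 + 2x) P\<close> for \<open>P = (1 + x + x\<^sup>2)\<^sup>n\<close>. Together they give a
  closed recursion for \<open>T\<^sub>n = c(n,n)\<close> and \<open>S\<^sub>n = c(n,n-1)\<close>:
  \<open>T\<^sub>n\<^sub>+\<^sub>1 = T\<^sub>n + 2 S\<^sub>n\<close> and \<open>(n+2) S\<^sub>n\<^sub>+\<^sub>1 = (n+1)(2 T\<^sub>n + S\<^sub>n)\<close>.
  Induction along it keeps \<open>1 \<le> T\<^sub>n/S\<^sub>n \<le> (n+1)/n\<close>, which is the upper bound and, for odd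
  \<open>n\<close>, the lower bound. For even \<open>n\<close> one more step of the recursion, started from the upper
  bound at \<open>n - 1\<close>, gives \<open>T\<^sub>n/S\<^sub>n \<ge> 1 + 4/(n(n+2))\<close>, which is the required lower bound.
\<close>

definition ternary_vectors :: "nat \<Rightarrow> (nat \<Rightarrow> nat) set" where
  "ternary_vectors n = {0..<n} \<rightarrow>\<^sub>E {0, 1, 2}"

text \<open>The index is an integer so that negative indices carry the coefficient \<open>0\<close>.\<close>

definition trinomial :: "nat \<Rightarrow> int \<Rightarrow> int" where
  "trinomial n i = int (card {v \<in> ternary_vectors n. int (\<Sum>j<n. v j) = i})"

lemma finite_ternary_vectors: "finite (ternary_vectors n)"
  by (simp add: ternary_vectors_def finite_PiE)

lemma ternary_vectors_Suc:
  "ternary_vectors (Suc n) = (\<lambda>(a, g). g(n := a)) ` ({0, 1, 2} \<times> ternary_vectors n)"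
  by (simp add: ternary_vectors_def atLeast0_lessThan_Suc PiE_insert_eq)

lemma inj_on_ternary_vectors_Suc:
  "inj_on (\<lambda>(a, g). g(n := a)) ({0, 1, 2} \<times> ternary_vectors n)"
  unfolding ternary_vectors_def by (rule inj_combinator) simp

lemma sum_fun_upd_lessThan_Suc:
  "(\<Sum>j<Suc n. (g(n := a)) j) = a + (\<Sum>j<n. g j :: nat)"
  by (simp add: sum.lessThan_Suc)

lemma trinomial_0: "trinomial 0 i = (if i = 0 then 1 else 0)"
  by (simp add: trinomial_def ternary_vectors_def)

lemma trinomial_Suc:
  "trinomial (Suc n) i = trinomial n i + trinomial n (i - 1) + trinomial n (i - 2)"
proof -
  let ?V = "ternary_vectors n" and ?upd = "\<lambda>(a, g). g(n := a)"
  let ?fibre = "\<lambda>a. {g \<in> ?V. int (\<Sum>j<n. g j) = i - int a}"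
  have "{v \<in> ternary_vectors (Suc n). int (\<Sum>j<Suc n. v j) = i} = ?upd ` Sigma {0, 1, 2} ?fibre"
    by (auto simp: ternary_vectors_Suc sum_fun_upd_lessThan_Suc image_iff)
  moreover have "inj_on ?upd (Sigma {0, 1, 2} ?fibre)"
    by (rule inj_on_subset[OF inj_on_ternary_vectors_Suc]) auto
  ultimately have "trinomial (Suc n) i = int (\<Sum>a\<in>{0, 1, 2}. card (?fibre a))"
    by (simp add: trinomial_def card_image finite_ternary_vectors)
  then show ?thesis
    by (simp add: trinomial_def add.assoc)
qed

lemma trinomial_index_recurrence:
  "(i + 1) * trinomial n (i + 1) = (int n - i) * trinomial n i + (2 * int n - i + 1) * trinomial n (i - 1)"
proof (induction n arbitrary: i)
  case 0
  then show ?case by (simp add: trinomial_0)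
next
  case (Suc n)
  have "(i + 1) * trinomial n (i + 1) = (int n - i) * trinomial n i + (2 * int n - i + 1) * trinomial n (i - 1)"
    "i * trinomial n i = (int n - i + 1) * trinomial n (i - 1) + (2 * int n - i + 2) * trinomial n (i - 2)"
    "(i - 1) * trinomial n (i - 1) = (int n - i + 2) * trinomial n (i - 2) + (2 * int n - i + 3) * trinomial n (i - 3)"
    using Suc.IH[of i] Suc.IH[of "i - 1"] Suc.IH[of "i - 2"] by (simp_all add: algebra_simps)
  then show ?case
    by (simp add: trinomial_Suc algebra_simps)
qed

definition central_trinomial :: "nat \<Rightarrow> int" where
  "central_trinomial n = trinomial n (int n)"

definition subcentral_trinomial :: "nat \<Rightarrow> int" where
  "subcentral_trinomial n = trinomial n (int n - 1)"

lemma trinomial_succ_central: "trinomial n (int n + 1) = trinomial n (int n - 1)"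
  using trinomial_index_recurrence[of "int n" n] by simp

lemma central_trinomial_Suc:
  "central_trinomial (Suc n) = central_trinomial n + 2 * subcentral_trinomial n"
  using trinomial_succ_central[of n]
  by (simp add: central_trinomial_def subcentral_trinomial_def trinomial_Suc add.commute)

lemma subcentral_trinomial_Suc:
  "(int n + 2) * subcentral_trinomial (Suc n) = (int n + 1) * (2 * central_trinomial n + subcentral_trinomial n)"
  using trinomial_index_recurrence[of "int n - 1" n]
  by (simp add: central_trinomial_def subcentral_trinomial_def trinomial_Suc algebra_simps)

lemma central_trinomial_bounds:
  assumes "n \<ge> 1"
  shows "int n * central_trinomial n \<le> (int n + 1) * subcentral_trinomial n
    \<and> subcentral_trinomial n \<le> central_trinomial n \<and> 0 < subcentral_trinomial n"
  using assms
proof (induction n rule: dec_induct)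
  case base
  then show ?case
    by (simp add: central_trinomial_def subcentral_trinomial_def trinomial_Suc trinomial_0)
next
  case (step n)
  let ?T = "central_trinomial n" and ?S = "subcentral_trinomial n"
  let ?T' = "central_trinomial (Suc n)" and ?S' = "subcentral_trinomial (Suc n)"
  have IH: "int n * ?T \<le> (int n + 1) * ?S" "?S \<le> ?T" "0 < ?S"
    using step.IH by auto
  have T': "?T' = ?T + 2 * ?S" and S': "(int n + 2) * ?S' = (int n + 1) * (2 * ?T + ?S)"
    by (rule central_trinomial_Suc, rule subcentral_trinomial_Suc)
  have "(int n + 2) * (int (Suc n) * ?T') = ((int n + 1) * (int n + 2)) * (?T + 2 * ?S)"
    by (simp add: T' algebra_simps)
  also have "\<dots> \<le> ((int n + 1) * (int n + 2)) * (2 * ?T + ?S)"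
    using IH(2) by (intro mult_left_mono) auto
  also have "\<dots> = (int n + 2) * ((int n + 2) * ?S')"
    unfolding S' by (simp add: algebra_simps)
  finally have "(int n + 2) * (int (Suc n) * ?T') \<le> (int n + 2) * ((int (Suc n) + 1) * ?S')"
    by (simp add: add.commute)
  moreover have "(int n + 2) * ?S' \<le> (int n + 2) * ?T'"
    unfolding S' T' using IH(1,3) by (simp add: algebra_simps)
  moreover have "0 < (int n + 2) * ?S'"
    using IH by (simp add: S')
  ultimately show ?case
    by (simp add: zero_less_mult_iff)
qed

lemma central_trinomial_upper_bound_weak:
  assumes "k \<ge> 4"
  shows "central_trinomial k * (int k ^ 2 + 3 * int k + 8) \<le> (int k + 1) * (int k + 5) * subcentral_trinomial k"
proof -
  let ?T = "central_trinomial k" and ?S = "subcentral_trinomial k" and ?K = "int k"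
  have bounds: "?K * ?T \<le> (?K + 1) * ?S" "0 < ?S"
    using central_trinomial_bounds[of k] assms by auto
  have poly: "?K * (?K + 1) * (?K + 5) = (?K + 1) * (?K\<^sup>2 + 3 * ?K + 8) + 2 * (?K - 4) * (?K + 1)"
    by (simp add: power2_eq_square algebra_simps)
  have "?K * (?T * (?K\<^sup>2 + 3 * ?K + 8)) \<le> (?K + 1) * ?S * (?K\<^sup>2 + 3 * ?K + 8)"
    using bounds(1) by (simp add: mult.assoc[symmetric] mult_right_mono)
  also have "\<dots> \<le> (?K + 1) * ?S * (?K\<^sup>2 + 3 * ?K + 8) + 2 * (?K - 4) * (?K + 1) * ?S"
    using assms bounds(2) by simp
  also have "\<dots> = ?K * ((?K + 1) * (?K + 5) * ?S)"
    unfolding mult.assoc[symmetric] poly by (simp add: algebra_simps)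
  finally show ?thesis
    using assms by simp
qed

lemma central_trinomial_lower_bound:
  assumes "n \<ge> 5"
  shows "(int n * (int n + 2) + 4) * subcentral_trinomial n \<le> int n * (int n + 2) * central_trinomial n"
proof -
  obtain k where n: "n = Suc k" and k: "k \<ge> 4"
    using assms by (metis Suc_le_D Suc_le_mono eval_nat_numeral(3))
  let ?T = "central_trinomial k" and ?S = "subcentral_trinomial k" and ?K = "int k"
  have "(?K + 2) * ((int n * (int n + 2) + 4) * subcentral_trinomial n)
      = ((?K + 1) * (?K + 3) + 4) * ((?K + 2) * subcentral_trinomial (Suc k))"
    unfolding n by (simp add: algebra_simps)
  also have "\<dots> = ((?K + 1) * (?K + 3) + 4) * (?K + 1) * (2 * ?T + ?S)"
    unfolding subcentral_trinomial_Suc by simp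
  also have "\<dots> = (?K + 1) * (?K + 2) * (?K + 3) * (?T + 2 * ?S)
      - (?K + 1) * ((?K + 1) * (?K + 5) * ?S - ?T * (?K\<^sup>2 + 3 * ?K + 8))"
    by (simp add: power2_eq_square algebra_simps)
  also have "\<dots> \<le> (?K + 1) * (?K + 2) * (?K + 3) * (?T + 2 * ?S)"
    using central_trinomial_upper_bound_weak[OF k] by simp
  also have "\<dots> = (?K + 2) * (int n * (int n + 2) * central_trinomial n)"
    unfolding n central_trinomial_Suc by (simp add: algebra_simps)
  finally show ?thesis
    by simp
qed

lemma ell_eq_trinomial: "int (ell i n) = trinomial n (int i)"
  by (simp only: ell_def trinomial_def ternary_vectors_def of_nat_eq_iff)

lemma ell_ratio_eq:
  assumes "n \<ge> 1"
  shows "real (ell n n) / real (ell (n - 1) n)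
    = real_of_int (central_trinomial n) / real_of_int (subcentral_trinomial n)"
proof -
  have "real (ell i n) = real_of_int (trinomial n (int i))" for i
    by (metis ell_eq_trinomial of_int_of_nat_eq)
  then show ?thesis
    using assms by (simp add: central_trinomial_def subcentral_trinomial_def of_nat_diff)
qed


lemma ell_ratio_bounds:
  assumes "n \<ge> 1"
  shows "1 \<le> real (ell n n) / real (ell (n - 1) n)
    \<and> real (ell n n) / real (ell (n - 1) n) \<le> (real n + 1) / real n"
proof -
  define T S where "T = real_of_int (central_trinomial n)" and "S = real_of_int (subcentral_trinomial n)"
  have "int n * central_trinomial n \<le> (int n + 1) * subcentral_trinomial n"
    "subcentral_trinomial n \<le> central_trinomial n" "0 < subcentral_trinomial n"
    using central_trinomial_bounds[OF assms] by auto
  then have "real n * T \<le> (real n + 1) * S" "S \<le> T" "0 < S"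
    unfolding T_def S_def by (fastforce dest: of_int_le_iff[where 'a=real, THEN iffD2])+
  moreover have "real (ell n n) / real (ell (n - 1) n) = T / S"
    unfolding T_def S_def by (rule ell_ratio_eq[OF assms])
  ultimately show ?thesis
    using assms by (simp only:) (simp add: field_simps)
qed

lemma ell_ratio_lower_bound_even:
  assumes n: "n = 2 * m" and m: "m \<ge> 3"
  shows "1 / real m + real m / (real m + 1) \<le> real (ell n n) / real (ell (n - 1) n)"
proof -
  define T S where "T = real_of_int (central_trinomial n)" and "S = real_of_int (subcentral_trinomial n)"
  have "4 * ((int m * int m + int m + 1) * subcentral_trinomial n)
      \<le> 4 * (int m * (int m + 1) * central_trinomial n)"
    using central_trinomial_lower_bound[of n] n m by (simp add: algebra_simps)
  then have "(real m * real m + real m + 1) * S \<le> real m * (real m + 1) * T"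
    unfolding T_def S_def by (fastforce dest: of_int_le_iff[where 'a=real, THEN iffD2])
  moreover have "0 < S"
    using central_trinomial_bounds[of n] n m unfolding S_def by simp
  ultimately have "(real m * real m + real m + 1) / (real m * (real m + 1)) \<le> T / S"
    using m by (simp add: divide_le_eq le_divide_eq mult.commute)
  also have "\<dots> = real (ell n n) / real (ell (n - 1) n)"
    unfolding T_def S_def by (rule ell_ratio_eq[symmetric]) (use n m in simp)
  finally show ?thesis
    using m by (simp add: field_simps)
qed

theorem mainTheorem17:
  fixes n :: nat
  assumes "n \<ge> 5"
  shows "(real_of_int (\<lceil>(real n - 1) / 2\<rceil> - \<lfloor>(real n - 1) / 2\<rfloor>)) / real_of_int \<lceil>(real n - 1) / 2\<rceil>
           + real_of_int \<lfloor>(real n + 1) / 2\<rfloor> / real_of_int \<lceil>(real n + 1) / 2\<rceil>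
         \<le> real (ell n n) / real (ell (n - 1) n)
       \<and> real (ell n n) / real (ell (n - 1) n) \<le> (real n + 1) / real n"
proof (cases "even n")
  case True
  then obtain m where m: "n = 2 * m" by blast
  have "\<lfloor>(real n - 1) / 2\<rfloor> = int m - 1" "\<lceil>(real n - 1) / 2\<rceil> = int m"
    "\<lfloor>(real n + 1) / 2\<rfloor> = int m" "\<lceil>(real n + 1) / 2\<rceil> = int m + 1"
    using m by (simp_all add: floor_eq_iff ceiling_eq_iff)
  then show ?thesis
    using ell_ratio_lower_bound_even[OF m] ell_ratio_bounds[of n] m assms by simp
next
  case False
  then obtain m where m: "n = 2 * m + 1" by (blast elim: oddE)
  have "(real n - 1) / 2 = real m" "(real n + 1) / 2 = real m + 1"
    using m by simp_all
  with ell_ratio_bounds[of n] assms show ?thesis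
    by (simp only:) simp
qed

end
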